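(* Let $\|\cdot\|$ be an arbitrary norm on $\mathbb{R}^d$, let $g:\mathbb{R}^d\to\mathbb{C}$ be a measurable function and let $A$ be a real invertible $d\times d$ matrix such that $$\sum_{j\in\mathbb{Z}} g(A^j\gamma)=1\quad\text{for all }\gamma\in\mathbb{R}^d\setminus\{0\},$$ and such that there is a constant $C>0$ with $\sum_{j\in\mathbb{Z}}|g(A^j\gamma)|\le C$ for all $\gamma\in\mathbb{R}^d\setminus\{0\}$. For $f\in L^1(\mathbb{R}^d)$ define $$h(\gamma)=(K_g f)(\gamma):=\int_{\mathbb{R}^d} f(t)\, g\Big(\frac{\gamma}{\|t\|}\Big)\,dt,\qquad \gamma\in\mathbb{R}^d.$$ Then $K_g f$ is well-defined for every $f\in L^1(\mathbb{R}^d)$, and $$\sum_{j\in\mathbb{Z}} h(A^j\gamma)=\int_{\mathbb{R}^d} f(t)\,dt\quad\text{for all }\gamma\in\mathbb{R}^d\setminus\{0\}.$$ In particular, if $\int_{\mathbb{R}^d}f(t)\,dt=1$ then $\sum_{j\in\mathbb{Z}} h(A^j\gamma)=1$ for all $\gamma\ne0$. Moreover, if $g$ is nonnegative, then $K_g$ maps nonnegative functions $f\in L^1(\mathbb{R}^d)$ to nonnegative functions. *)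

theory Defs
  imports "HOL-Analysis.Analysis"
begin

definition is_norm :: "('a::real_vector \<Rightarrow> real) \<Rightarrow> bool" where
  "is_norm N \<longleftrightarrow> (\<forall>x. N x \<ge> 0) \<and> (\<forall>x. N x = 0 \<longleftrightarrow> x = 0) \<and>
     (\<forall>c x. N (c *\<^sub>R x) = \<bar>c\<bar> * N x) \<and> (\<forall>x y. N (x + y) \<le> N x + N y)"

definition mat_zpow_app :: "real^'n^'n \<Rightarrow> int \<Rightarrow> real^'n \<Rightarrow> real^'n" where
  "mat_zpow_app A j x =
     (if j \<ge> 0 then ((\<lambda>v. A *v v) ^^ nat j) x
      else ((\<lambda>v. matrix_inv A *v v) ^^ nat (- j)) x)"

definition K_op :: "(real^'n \<Rightarrow> real) \<Rightarrow> (real^'n \<Rightarrow> complex) \<Rightarrow> (real^'n \<Rightarrow> complex)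
    \<Rightarrow> real^'n \<Rightarrow> complex" where
  "K_op N g f \<gamma> = (LINT t|lborel. f t * g ((1 / N t) *\<^sub>R \<gamma>))"

definition nonneg_c :: "complex \<Rightarrow> bool" where
  "nonneg_c z \<longleftrightarrow> Im z = 0 \<and> Re z \<ge> 0"

end

theory Submission
  imports Defs
begin

text \<open>Write \<open>\<gamma>\<^sub>t = \<gamma> / \<parallel>t\<parallel>\<close>. Since each \<open>A\<^sup>j\<close> is linear, \<open>g (A\<^sup>j \<gamma> / \<parallel>t\<parallel>) = g (A\<^sup>j \<gamma>\<^sub>t)\<close>, so for
  \<open>t \<noteq> 0\<close> the inner sum \<open>\<Sum>\<^sub>j f t g (A\<^sup>j \<gamma>\<^sub>t)\<close> equals \<open>f t\<close>, and its absolute version is at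
  most \<open>C \<bar>f t\<bar>\<close>. The latter bound makes \<open>(t, j) \<mapsto> f t g (A\<^sup>j \<gamma>\<^sub>t)\<close> integrable on
  \<open>\<real>\<^sup>d \<times> \<int>\<close>, so by Fubini \<open>\<Sum>\<^sub>j (K\<^sub>g f)(A\<^sup>j \<gamma>) = \<integral> f\<close>. Boundedness of \<open>g\<close> (by \<open>C\<close> away
  from 0) gives well-definedness, and positivity is inherited by the integral.\<close>

lemma is_norm_pos: "is_norm N \<Longrightarrow> x \<noteq> 0 \<Longrightarrow> N x > 0"
  unfolding is_norm_def by (metis less_eq_real_def)

lemma is_norm_convex:
  assumes "is_norm N"
  shows "convex_on UNIV N"
proof (rule convex_onI)
  fix t :: real and x y
  assume "0 < t" "t < 1"
  have "N ((1 - t) *\<^sub>R x + t *\<^sub>R y) \<le> N ((1 - t) *\<^sub>R x) + N (t *\<^sub>R y)"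
    using assms unfolding is_norm_def by blast
  also have "\<dots> = (1 - t) * N x + t * N y"
    using assms \<open>0 < t\<close> \<open>t < 1\<close> unfolding is_norm_def by simp
  finally show "N ((1 - t) *\<^sub>R x + t *\<^sub>R y) \<le> (1 - t) * N x + t * N y" .
qed simp

lemma borel_measurable_is_norm:
  fixes N :: "'a::euclidean_space \<Rightarrow> real"
  assumes "is_norm N"
  shows "N \<in> borel_measurable borel"
  using convex_on_continuous[OF open_UNIV is_norm_convex[OF assms]]
  by (rule borel_measurable_continuous_onI)

lemma funpow_matrix_vector_mult_scaleR:
  fixes B :: "real^'n^'n"
  shows "((\<lambda>v. B *v v) ^^ n) (c *\<^sub>R x) = c *\<^sub>R ((\<lambda>v. B *v v) ^^ n) x"
  by (induction n) (auto simp: matrix_vector_mult_scaleR)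

lemma mat_zpow_app_scaleR: "mat_zpow_app A j (c *\<^sub>R x) = c *\<^sub>R mat_zpow_app A j x"
  unfolding mat_zpow_app_def by (simp add: funpow_matrix_vector_mult_scaleR)

lemma mat_zpow_app_0: "mat_zpow_app A 0 x = x"
  by (simp add: mat_zpow_app_def)

lemma integrable_count_space_iff_abs_summable:
  fixes h :: "'a \<Rightarrow> 'b::{banach,second_countable_topology}"
  shows "integrable (count_space A) h \<longleftrightarrow> (\<lambda>j. norm (h j)) summable_on A"
  using abs_summable_equivalent[of h A] unfolding Infinite_Set_Sum.abs_summable_on_def by (rule sym)

lemma integral_count_space_eq_infsum:
  fixes h :: "'a \<Rightarrow> 'b::{banach,second_countable_topology}"
  shows "integrable (count_space A) h \<Longrightarrow> integral\<^sup>L (count_space A) h = infsum h A"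
  using infsetsum_infsum[of h A] unfolding Infinite_Set_Sum.abs_summable_on_def infsetsum_def .

lemma norm_le_infsum_norm:
  assumes "(\<lambda>j. norm (h j)) summable_on UNIV"
  shows "norm (h i) \<le> (\<Sum>\<^sub>\<infinity>j. norm (h j))"
  using finite_sum_le_infsum[OF assms, of "{i}"] by simp

lemma has_sum_integral_swap:
  fixes F :: "'a \<Rightarrow> 'i::countable \<Rightarrow> 'b::{banach,second_countable_topology}"
  assumes "sigma_finite_measure M"
    and meas: "\<And>j. (\<lambda>x. F x j) \<in> borel_measurable M"
    and H_meas: "H \<in> borel_measurable M"
    and sums: "AE x in M. (F x has_sum H x) UNIV"
    and summable: "AE x in M. (\<lambda>j. norm (F x j)) summable_on UNIV"
    and bound: "AE x in M. (\<Sum>\<^sub>\<infinity>j. norm (F x j)) \<le> G x"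
    and G: "integrable M G"
  shows "((\<lambda>j. \<integral>x. F x j \<partial>M) has_sum (\<integral>x. H x \<partial>M)) UNIV"
proof -
  interpret P: pair_sigma_finite M "count_space (UNIV :: 'i set)"
    using assms(1) by (simp add: pair_sigma_finite_def sigma_finite_measure_count_space)
  have F_meas[measurable]: "case_prod F \<in> borel_measurable (M \<Otimes>\<^sub>M count_space UNIV)"
    using measurable_compose_countable'[where f="\<lambda>j p. F (fst p) j" and g=snd and I=UNIV] meas
    by (simp add: case_prod_beta')
  have inner: "AE x in M. integrable (count_space UNIV) (F x)"
    using summable by (simp add: integrable_count_space_iff_abs_summable)
  have norm_meas: "(\<lambda>x. \<integral>j. norm (F x j) \<partial>count_space UNIV) \<in> borel_measurable M"
    using P.M2.borel_measurable_lebesgue_integral[of "\<lambda>x j. norm (F x j)"] by simp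
  have "integrable M (\<lambda>x. \<integral>j. norm (F x j) \<partial>count_space UNIV)"
  proof (rule Bochner_Integration.integrable_bound[OF G norm_meas])
    show "AE x in M. norm (\<integral>j. norm (F x j) \<partial>count_space UNIV) \<le> norm (G x)"
      using inner bound
    proof eventually_elim
      case (elim x)
      have "0 \<le> (\<Sum>\<^sub>\<infinity>j. norm (F x j))" by (simp add: infsum_nonneg)
      with elim show ?case by (simp add: integral_count_space_eq_infsum)
    qed
  qed
  then have F_int: "integrable (M \<Otimes>\<^sub>M count_space UNIV) (case_prod F)"
    using inner by (intro P.Fubini_integrable) simp_all
  have "(\<integral>j. (\<integral>x. F x j \<partial>M) \<partial>count_space UNIV) = (\<integral>x. (\<integral>j. F x j \<partial>count_space UNIV) \<partial>M)"
    by (rule P.Fubini_integral[OF F_int])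
  also have "\<dots> = (\<integral>x. H x \<partial>M)"
    using inner sums P.M2.borel_measurable_lebesgue_integral[of F] H_meas
    by (intro integral_cong_AE) (auto simp: integral_count_space_eq_infsum infsumI)
  finally have "(\<integral>j. (\<integral>x. F x j \<partial>M) \<partial>count_space UNIV) = (\<integral>x. H x \<partial>M)" .
  moreover have "integrable (count_space UNIV) (\<lambda>j. \<integral>x. F x j \<partial>M)"
    by (rule P.integrable_snd[OF F_int])
  ultimately show ?thesis
    by (metis has_sum_infsum integral_count_space_eq_infsum
        integrable_count_space_iff_abs_summable abs_summable_summable)
qed

lemma nonneg_c_integral:
  assumes "integrable M h" and "AE x in M. nonneg_c (h x)"
  shows "nonneg_c (integral\<^sup>L M h)"
proof -
  have "Im (integral\<^sup>L M h) = (\<integral>x. Im (h x) \<partial>M)" "Re (integral\<^sup>L M h) = (\<integral>x. Re (h x) \<partial>M)"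
    using assms(1) by simp_all
  moreover have "(\<integral>x. Im (h x) \<partial>M) = 0"
    using assms(2) by (intro integral_eq_zero_AE) (auto simp: nonneg_c_def)
  moreover have "(\<integral>x. Re (h x) \<partial>M) \<ge> 0"
    using assms(2) by (intro integral_nonneg_AE) (auto simp: nonneg_c_def)
  ultimately show ?thesis by (simp add: nonneg_c_def)
qed

lemma integrable_mult_scaled_bounded:
  fixes N :: "'a::euclidean_space \<Rightarrow> real" and f g :: "'a \<Rightarrow> complex"
  assumes "is_norm N" and [measurable]: "g \<in> borel_measurable borel"
    and g_bounded: "\<And>x. norm (g x) \<le> B" and f: "integrable lborel f"
  shows "integrable lborel (\<lambda>t. f t * g ((1 / N t) *\<^sub>R \<gamma>))"
proof (rule Bochner_Integration.integrable_bound)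
  show "integrable lborel (\<lambda>t. of_real B * f t)"
    using f by simp
  have [measurable]: "N \<in> borel_measurable borel" "f \<in> borel_measurable lborel"
    using borel_measurable_is_norm[OF assms(1)] f by auto
  show "(\<lambda>t. f t * g ((1 / N t) *\<^sub>R \<gamma>)) \<in> borel_measurable lborel"
    by measurable
  have "B \<ge> 0"
    using g_bounded norm_ge_zero order_trans by blast
  have "norm (f t) * norm (g ((1 / N t) *\<^sub>R \<gamma>)) \<le> norm (f t) * B" for t
    by (simp add: mult_left_mono g_bounded)
  with \<open>B \<ge> 0\<close> show "AE t in lborel. norm (f t * g ((1 / N t) *\<^sub>R \<gamma>)) \<le> norm (of_real B * f t)"
    by (simp add: norm_mult mult.commute)
qed

lemma K_op_has_sum:
  fixes N :: "real^'n \<Rightarrow> real" and T :: "'i::countable \<Rightarrow> real^'n \<Rightarrow> real^'n"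
  assumes "is_norm N" and [measurable]: "g \<in> borel_measurable borel"
    and T_scaleR: "\<And>j c x. T j (c *\<^sub>R x) = c *\<^sub>R T j x"
    and g_sum: "\<And>x. x \<noteq> 0 \<Longrightarrow> ((\<lambda>j. g (T j x)) has_sum 1) UNIV"
    and g_abs: "\<And>x. x \<noteq> 0 \<Longrightarrow> (\<lambda>j. norm (g (T j x))) summable_on UNIV
                     \<and> (\<Sum>\<^sub>\<infinity>j. norm (g (T j x))) \<le> C"
    and f: "integrable lborel f" and "\<gamma> \<noteq> 0"
  shows "((\<lambda>j. K_op N g f (T j \<gamma>)) has_sum (LINT t|lborel. f t)) UNIV"
proof -
  have [measurable]: "N \<in> borel_measurable borel" "f \<in> borel_measurable lborel"
    using borel_measurable_is_norm[OF assms(1)] f by auto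
  define F where "F t j = f t * g ((1 / N t) *\<^sub>R T j \<gamma>)" for t j
  have F_scaled: "F t = (\<lambda>j. f t * g (T j ((1 / N t) *\<^sub>R \<gamma>)))" for t
    by (simp add: F_def T_scaleR fun_eq_iff)
  have AE_nonzero: "AE t in lborel. (1 / N t) *\<^sub>R \<gamma> \<noteq> 0"
    using AE_lborel_singleton[of 0]
    by eventually_elim (use is_norm_pos[OF assms(1)] \<open>\<gamma> \<noteq> 0\<close> in fastforce)
  have "((\<lambda>j. \<integral>t. F t j \<partial>lborel) has_sum (\<integral>t. f t \<partial>lborel)) UNIV"
  proof (rule has_sum_integral_swap[where G="\<lambda>t. norm (f t) * C"])
    show "AE t in lborel. (F t has_sum f t) UNIV"
      using AE_nonzero by eventually_elim (use has_sum_cmult_right[OF g_sum] in \<open>simp add: F_scaled\<close>)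
    show "AE t in lborel. (\<lambda>j. norm (F t j)) summable_on UNIV"
      using AE_nonzero
    proof eventually_elim
      case (elim t)
      then show ?case
        using summable_on_cmult_right[OF conjunct1[OF g_abs[OF elim]]] by (simp add: F_scaled norm_mult)
    qed
    show "AE t in lborel. (\<Sum>\<^sub>\<infinity>j. norm (F t j)) \<le> norm (f t) * C"
      using AE_nonzero
    proof eventually_elim
      case (elim t)
      then show ?case
        using conjunct2[OF g_abs[OF elim]] by (simp add: F_scaled norm_mult infsum_cmult_right' mult_left_mono)
    qed
  qed (use f in \<open>simp_all add: F_def sigma_finite_lborel\<close>)
  then show ?thesis
    by (simp add: K_op_def F_def)
qed

theorem proposition3p1:
  fixes N :: "real^'n \<Rightarrow> real"
    and g :: "real^'n \<Rightarrow> complex"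
    and A :: "real^'n^'n"
    and C :: real
    and f :: "real^'n \<Rightarrow> complex"
  assumes norm: "is_norm N"
    and g_meas: "g \<in> borel_measurable borel"
    and A_inv: "invertible A"
    and g_sum: "\<And>\<gamma>. \<gamma> \<noteq> 0 \<Longrightarrow> ((\<lambda>j. g (mat_zpow_app A j \<gamma>)) has_sum 1) UNIV"
    and C_pos: "C > 0"
    and g_abs: "\<And>\<gamma>. \<gamma> \<noteq> 0 \<Longrightarrow> (\<lambda>j. norm (g (mat_zpow_app A j \<gamma>))) summable_on UNIV
                     \<and> (\<Sum>\<^sub>\<infinity>j. norm (g (mat_zpow_app A j \<gamma>))) \<le> C"
    and f_L1: "integrable lborel f"
  shows "(\<forall>\<gamma>. integrable lborel (\<lambda>t. f t * g ((1 / N t) *\<^sub>R \<gamma>)))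
    \<and> (\<forall>\<gamma>. \<gamma> \<noteq> 0 \<longrightarrow>
          ((\<lambda>j. K_op N g f (mat_zpow_app A j \<gamma>)) has_sum (LINT t|lborel. f t)) UNIV)
    \<and> ((LINT t|lborel. f t) = 1 \<longrightarrow> (\<forall>\<gamma>. \<gamma> \<noteq> 0 \<longrightarrow>
          ((\<lambda>j. K_op N g f (mat_zpow_app A j \<gamma>)) has_sum 1) UNIV))
    \<and> ((\<forall>x. nonneg_c (g x)) \<longrightarrow> (AE t in lborel. nonneg_c (f t)) \<longrightarrow>
          (\<forall>\<gamma>. nonneg_c (K_op N g f \<gamma>)))"
proof -
  have "norm (g x) \<le> C" if "x \<noteq> 0" for x
    using norm_le_infsum_norm[of "\<lambda>j. g (mat_zpow_app A j x)" 0] g_abs[OF that]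
    by (simp add: mat_zpow_app_0)
  then have g_bounded: "norm (g x) \<le> max C (norm (g 0))" for x
    by (cases "x = 0") force+
  note integrable = integrable_mult_scaled_bounded[OF norm g_meas g_bounded f_L1]
  have "nonneg_c (K_op N g f \<gamma>)"
    if "\<forall>x. nonneg_c (g x)" "AE t in lborel. nonneg_c (f t)" for \<gamma>
    unfolding K_op_def using integrable that(2)
    by (intro nonneg_c_integral) (auto simp: nonneg_c_def that(1)[unfolded nonneg_c_def])
  then show ?thesis
    using integrable K_op_has_sum[OF norm g_meas mat_zpow_app_scaleR g_sum g_abs f_L1] by auto
qed

end
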